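(* Let $(C,M)$ be an instance of 2-SBCM with $|C|=3$ characters and $n\ge 1$ meetings in which no two consecutive meetings of $M$ are equal. Then it has a solution using at most $\lceil n/2\rceil-1$ block crossings.
   Context: A storyline instance is a pair $(C,M)$ where $C=\{1,\dots,k\}$ is a set of characters and $M=[m_1,\dots,m_n]$ is a sequence of meetings with $m_i\subseteq C$; in 2-SBCM every meeting has exactly two characters. A permutation of $C$ lists each character exactly once. For $1\le a\le b<c\le k$, the block crossing $(a,b,c)$ maps $\langle \pi_1,\dots,\pi_k\rangle$ to $\langle \pi_1,\dots,\pi_{a-1},\pi_{b+1},\dots,\pi_c,\pi_a,\dots,\pi_b,\pi_{c+1},\dots,\pi_k\rangle$. A meeting fits (is supported by) a permutation if its characters occupy consecutive positions. A solution is a start permutation $\pi^0$ and sequences $B_1,\dots,B_n$ of block crossings (possibly empty) such that, with $\pi^i$ obtained by applying $B_i$ in order to $\pi^{i-1}$, $\pi^i$ supports $m_i$ for all $i$; its number of block crossings is $\sum_i|B_i|$. *)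

theory Defs
  imports Complex_Main
begin

definition is_perm :: "nat \<Rightarrow> nat list \<Rightarrow> bool" where
  "is_perm k \<pi> \<longleftrightarrow> distinct \<pi> \<and> set \<pi> = {1..k}"

definition valid_bc :: "nat \<Rightarrow> nat \<times> nat \<times> nat \<Rightarrow> bool" where
  "valid_bc k t = (case t of (a,b,c) \<Rightarrow> 1 \<le> a \<and> a \<le> b \<and> b < c \<and> c \<le> k)"

text \<open>(a,b,c) maps pi_1..pi_k to pi_1..pi_{a-1}, pi_{b+1}..pi_c, pi_a..pi_b, pi_{c+1}..pi_k
  (positions 1-based, list indices 0-based).\<close>
definition apply_bc :: "nat \<times> nat \<times> nat \<Rightarrow> 'a list \<Rightarrow> 'a list" where
  "apply_bc t \<pi> = (case t of (a,b,c) \<Rightarrow>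
     take (a - 1) \<pi> @ take (c - b) (drop b \<pi>) @ take (b - a + 1) (drop (a - 1) \<pi>) @ drop c \<pi>)"

definition supports :: "'a list \<Rightarrow> 'a set \<Rightarrow> bool" where
  "supports \<pi> m \<longleftrightarrow> (\<exists>i j. i \<le> j \<and> j < length \<pi> \<and> set (take (j - i + 1) (drop i \<pi>)) = m)"

text \<open>Permutation after meeting i (0-based): apply B_1, ..., B_{i+1} in order to pi0.\<close>
definition perm_after :: "nat list \<Rightarrow> (nat \<times> nat \<times> nat) list list \<Rightarrow> nat \<Rightarrow> nat list" where
  "perm_after \<pi>0 Bs i = fold apply_bc (concat (take (Suc i) Bs)) \<pi>0"

definition is_solution :: "nat \<Rightarrow> nat set list \<Rightarrow> nat list \<Rightarrow> (nat \<times> nat \<times> nat) list list \<Rightarrow> bool" where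
  "is_solution k M \<pi>0 Bs \<longleftrightarrow> is_perm k \<pi>0 \<and> length Bs = length M \<and>
     (\<forall>B\<in>set Bs. \<forall>t\<in>set B. valid_bc k t) \<and>
     (\<forall>i<length M. supports (perm_after \<pi>0 Bs i) (M ! i))"

definition num_bc :: "(nat \<times> nat \<times> nat) list list \<Rightarrow> nat" where
  "num_bc Bs = sum_list (map length Bs)"

end

theory Submission
  imports Defs
begin

text \<open>Any two meetings among three characters share a character, and a single block crossing
  moves that character to the middle of the current permutation, where both meetings fit.
  Hence consecutive pairs of meetings cost at most one block crossing each, and the first
  pair costs none because the start permutation can be chosen freely.\<close>

lemma ceiling_half_of_nat: "\<lceil>real n / 2\<rceil> = int ((n + 1) div 2)"
  by (rule ceiling_unique) linarith+

lemma subsets_intersect_if_card_sum_exceeds: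
  assumes "finite S" "A \<subseteq> S" "B \<subseteq> S" "card A + card B > card S"
  shows "A \<inter> B \<noteq> {}"
proof
  assume "A \<inter> B = {}"
  then have "card (A \<union> B) = card A + card B"
    using assms(1-3) by (meson card_Un_disjoint finite_subset)
  moreover have "card (A \<union> B) \<le> card S"
    using assms(1-3) by (simp add: card_mono)
  ultimately show False using assms(4) by linarith
qed

lemma is_perm_3_obtain:
  assumes "is_perm 3 \<pi>"
  obtains p q r where "\<pi> = [p, q, r]"
proof -
  have "length \<pi> = 3"
    using assms distinct_card unfolding is_perm_def by fastforce
  then show thesis
    using that by (auto simp: numeral_eq_Suc length_Suc_conv)
qed

lemma supports_through_middle:
  assumes "m \<subseteq> {x, b, y}" "card m = 2" "b \<in> m"
  shows "supports [x, b, y] m"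
proof -
  obtain z where z: "m = {b, z}" "z \<in> {x, y}"
    using assms by (auto simp: card_2_iff)
  have "supports [x, b, y] {x, b}"
    unfolding supports_def by (rule exI[of _ 0], rule exI[of _ 1]) simp
  moreover have "supports [x, b, y] {b, y}"
    unfolding supports_def by (rule exI[of _ 1], rule exI[of _ 2]) (simp add: numeral_eq_Suc)
  ultimately show ?thesis
    using z by (auto simp: insert_commute)
qed

lemma move_to_middle:
  assumes "is_perm 3 \<pi>" "b \<in> set \<pi>"
  shows "\<exists>B x y. length B \<le> 1 \<and> (\<forall>t\<in>set B. valid_bc 3 t) \<and>
           fold apply_bc B \<pi> = [x, b, y] \<and> is_perm 3 [x, b, y]"
proof -
  obtain p q r where \<pi>: "\<pi> = [p, q, r]"
    using assms(1) by (rule is_perm_3_obtain)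
  consider "b = p" | "b = q" | "b = r"
    using assms(2) \<pi> by auto
  then show ?thesis
  proof cases
    case 1
    then show ?thesis using assms(1) \<pi>
      by (intro exI[of _ "[(1, 1, 2)]"] exI[of _ q] exI[of _ r])
        (auto simp: valid_bc_def apply_bc_def is_perm_def numeral_eq_Suc insert_commute)
  next
    case 2
    then show ?thesis using assms(1) \<pi>
      by (intro exI[of _ "[]"] exI[of _ p] exI[of _ r]) auto
  next
    case 3
    then show ?thesis using assms(1) \<pi>
      by (intro exI[of _ "[(2, 2, 3)]"] exI[of _ p] exI[of _ q])
        (auto simp: valid_bc_def apply_bc_def is_perm_def numeral_eq_Suc insert_commute)
  qed
qed

lemma one_crossing_supports_two_meetings:
  assumes "is_perm 3 \<pi>"
    and "m \<subseteq> {1..3}" "card m = 2" "m' \<subseteq> {1..3}" "card m' = 2"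
  shows "\<exists>B. length B \<le> 1 \<and> (\<forall>t\<in>set B. valid_bc 3 t) \<and> is_perm 3 (fold apply_bc B \<pi>) \<and>
           supports (fold apply_bc B \<pi>) m \<and> supports (fold apply_bc B \<pi>) m'"
proof -
  obtain b where b: "b \<in> m" "b \<in> m'"
    using subsets_intersect_if_card_sum_exceeds[of "{1..3::nat}" m m'] assms(2-5) by auto
  have "b \<in> set \<pi>"
    using assms(1,2) b(1) unfolding is_perm_def by auto
  then obtain B x y where B: "length B \<le> 1" "\<forall>t\<in>set B. valid_bc 3 t"
      "fold apply_bc B \<pi> = [x, b, y]" "is_perm 3 [x, b, y]"
    using move_to_middle assms(1) by blast
  have "{1..3} = {x, b, y}"
    using B(4) unfolding is_perm_def by simp
  then show ?thesis
    using B b assms(2-5) supports_through_middle by metis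
qed

lemma start_permutation_supporting_two_meetings:
  assumes "m \<subseteq> {1..3}" "card m = 2" "m' \<subseteq> {1..3}" "card m' = 2"
  shows "\<exists>\<pi>. is_perm 3 \<pi> \<and> supports \<pi> m \<and> supports \<pi> m'"
proof -
  have "is_perm 3 [1, 2, 3]" by (auto simp: is_perm_def)
  then show ?thesis
    using one_crossing_supports_two_meetings assms by blast
qed

lemma is_solution_Nil: "is_solution k [] \<pi> [] \<longleftrightarrow> is_perm k \<pi>"
  by (simp add: is_solution_def)

lemma is_solution_Cons:
  assumes "is_perm k \<pi>" "\<forall>t\<in>set B. valid_bc k t" "supports (fold apply_bc B \<pi>) m"
    and "is_solution k M (fold apply_bc B \<pi>) Bs"
  shows "is_solution k (m # M) \<pi> (B # Bs)"
  unfolding is_solution_def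
proof (intro conjI ballI allI impI)
  fix i assume "i < length (m # M)"
  with assms(3,4) show "supports (perm_after \<pi> (B # Bs) i) ((m # M) ! i)"
    by (cases i) (simp_all add: perm_after_def is_solution_def)
qed (use assms in \<open>auto simp: is_solution_def\<close>)

lemma solution_one_crossing_per_two_meetings:
  assumes "\<forall>m\<in>set M. m \<subseteq> {1..3} \<and> card m = 2" "is_perm 3 \<pi>"
  shows "\<exists>Bs. is_solution 3 M \<pi> Bs \<and> num_bc Bs \<le> (length M + 1) div 2"
  using assms
proof (induction M arbitrary: \<pi> rule: induct_list012)
  case 1
  then show ?case by (intro exI[of _ "[]"]) (simp add: is_solution_Nil num_bc_def)
next
  case (2 x)
  then obtain B where "length B \<le> 1" "\<forall>t\<in>set B. valid_bc 3 t" "is_perm 3 (fold apply_bc B \<pi>)"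
      "supports (fold apply_bc B \<pi>) x"
    using one_crossing_supports_two_meetings[of \<pi> x x] by auto
  with "2.prems"(2) show ?case
    by (intro exI[of _ "[B]"]) (auto simp: is_solution_Cons is_solution_Nil num_bc_def)
next
  case (3 x y zs)
  then obtain B where B: "length B \<le> 1" "\<forall>t\<in>set B. valid_bc 3 t"
      "is_perm 3 (fold apply_bc B \<pi>)"
      "supports (fold apply_bc B \<pi>) x" "supports (fold apply_bc B \<pi>) y"
    using one_crossing_supports_two_meetings[of \<pi> x y] by auto
  moreover have "\<forall>m\<in>set zs. m \<subseteq> {1..3} \<and> card m = 2"
    using "3.prems"(1) by simp
  ultimately obtain Bs where
      Bs: "is_solution 3 zs (fold apply_bc B \<pi>) Bs" "num_bc Bs \<le> (length zs + 1) div 2"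
    using "3.IH"(1) by blast
  have "is_solution 3 (x # y # zs) \<pi> (B # [] # Bs)"
    using B Bs(1) "3.prems"(2) by (simp add: is_solution_Cons)
  moreover have "num_bc (B # [] # Bs) \<le> (length (x # y # zs) + 1) div 2"
    using B(1) Bs(2) by (simp add: num_bc_def)
  ultimately show ?case by blast
qed

theorem lemma5:
  fixes M :: "nat set list"
  assumes "length M \<ge> 1"
    and "\<forall>m\<in>set M. m \<subseteq> {1..3} \<and> card m = 2"
    and "\<forall>i. Suc i < length M \<longrightarrow> M ! i \<noteq> M ! Suc i"
  shows "\<exists>\<pi>0 Bs. is_solution 3 M \<pi>0 Bs \<and>
           real (num_bc Bs) \<le> real_of_int (ceiling (real (length M) / 2)) - 1"
proof -
  obtain x rest where M: "M = x # rest"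
    using assms(1) by (cases M) auto
  define y where "y = hd (rest @ [x])" \<comment> \<open>the second meeting, or \<open>x\<close> again if there is none\<close>
  have meetings: "x \<subseteq> {1..3}" "card x = 2" "y \<subseteq> {1..3}" "card y = 2"
    using assms(2) M by (auto simp: y_def hd_append split: if_splits)
  obtain \<pi>0 where \<pi>0: "is_perm 3 \<pi>0" "supports \<pi>0 x" "supports \<pi>0 y"
    using start_permutation_supporting_two_meetings meetings by blast
  show ?thesis
  proof (cases rest)
    case Nil
    then have "is_solution 3 M \<pi>0 [[]]"
      using M \<pi>0 by (simp add: is_solution_Cons is_solution_Nil)
    then show ?thesis
      using M Nil by (intro exI[of _ \<pi>0] exI[of _ "[[]]"]) (simp add: num_bc_def)
  next
    case (Cons y' zs)
    then obtain Bs where Bs: "is_solution 3 zs \<pi>0 Bs" "num_bc Bs \<le> (length zs + 1) div 2"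
      using solution_one_crossing_per_two_meetings[of zs \<pi>0] assms(2) M \<pi>0(1) by auto
    have "is_solution 3 M \<pi>0 ([] # [] # Bs)"
      using M Cons \<pi>0 Bs(1) by (simp add: is_solution_Cons y_def)
    moreover have "\<lceil>real (length M) / 2\<rceil> = int ((length zs + 1) div 2) + 1"
      using ceiling_half_of_nat[of "length M"] M Cons by simp
    ultimately show ?thesis
      using Bs(2) by (intro exI[of _ \<pi>0] exI[of _ "[] # [] # Bs"]) (simp add: num_bc_def)
  qed
qed

end
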